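(* Let $\mathcal{L}:TQ\to\mathbb{R}$, $Q=\mathbb{R}^n$, be a smooth Lagrangian, let $s\ge1$ and fix $0=d_0<d_1<\dots<d_s=1$. Let $q:[0,h_0]\to Q$ be smooth and, for small $h>0$, let $q_{EL}:[0,h]\to Q$ be a smooth solution of the Euler–Lagrange equation $\frac{\partial\mathcal L}{\partial q}(q,\dot q)-\frac{d}{dt}\frac{\partial\mathcal L}{\partial\dot q}(q,\dot q)=0$ with $q_{EL}(0)=q(0)$, $q_{EL}(h)=q(h)$ (depending smoothly/uniformly on $h$ so that its derivatives are bounded uniformly in $h$). Let $\hat q$ be the polynomial of degree at most $s$ interpolating $q_{EL}$ at the points $hd_0,\dots,hd_s$. Then \[ \int_0^h\mathcal L(q_{EL},\dot q_{EL})\,dt-\int_0^h\mathcal L(\hat q,\dot{\hat q})\,dt=\mathcal O(h^{2s+1})\quad\text{as }h\to0. \]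
   Context: The Euler–Lagrange equation is the stationarity condition of the action $\int_0^h\mathcal L(q,\dot q)\,dt$ under variations vanishing at the endpoints. *)

theory Defs
  imports "HOL-Analysis.Analysis" "HOL-Library.Landau_Symbols"
begin

text \<open>C-infinity maps between normed spaces: all iterated Frechet derivatives exist.
  D vs x is the iterated derivative applied to the directions in vs (most recent first).\<close>
definition smooth_map :: "('a::real_normed_vector \<Rightarrow> 'b::real_normed_vector) \<Rightarrow> bool" where
  "smooth_map f \<longleftrightarrow> (\<exists>D :: 'a list \<Rightarrow> 'a \<Rightarrow> 'b. D [] = f \<and>
      (\<forall>vs x. (D vs has_derivative (\<lambda>v. D (v # vs) x)) (at x)))"

definition curve_derivs :: "real set \<Rightarrow> (real \<Rightarrow> 'a::real_normed_vector) \<Rightarrow> (nat \<Rightarrow> real \<Rightarrow> 'a) \<Rightarrow> bool" where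
  "curve_derivs S f Dk \<longleftrightarrow> (\<forall>t\<in>S. Dk 0 t = f t) \<and>
      (\<forall>k. \<forall>t\<in>S. (Dk k has_vector_derivative Dk (Suc k) t) (at t within S))"

definition smooth_curve_on :: "real set \<Rightarrow> (real \<Rightarrow> 'a::real_normed_vector) \<Rightarrow> bool" where
  "smooth_curve_on S f \<longleftrightarrow> (\<exists>Dk. curve_derivs S f Dk)"

definition dLdq :: "('a::real_normed_vector \<times> 'a \<Rightarrow> real) \<Rightarrow> 'a \<Rightarrow> 'a \<Rightarrow> 'a \<Rightarrow> real" where
  "dLdq L x v w = frechet_derivative L (at (x, v)) (w, 0)"

definition dLdv :: "('a::real_normed_vector \<times> 'a \<Rightarrow> real) \<Rightarrow> 'a \<Rightarrow> 'a \<Rightarrow> 'a \<Rightarrow> real" where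
  "dLdv L x v w = frechet_derivative L (at (x, v)) (0, w)"

definition action :: "('a::euclidean_space \<times> 'a \<Rightarrow> real) \<Rightarrow> real \<Rightarrow> (real \<Rightarrow> 'a) \<Rightarrow> real" where
  "action L h c = integral {0..h} (\<lambda>t. L (c t, vector_derivative c (at t within {0..h})))"

end

theory Submission
  imports Defs
begin

text \<open>The interpolation error of \<open>qhat\<close> vanishes at the \<open>s + 1\<close> nodes, so by repeated
  applications of Rolle's theorem its \<open>k\<close>-th derivative is \<open>O(h^(s+1-k))\<close>; in particular the
  deviation \<open>(qhat - qEL, qhat' - qEL')\<close> is \<open>O(h^s)\<close> on \<open>[0,h]\<close>. Expanding \<open>L\<close> to second order
  around \<open>(qEL, qEL')\<close>, the action difference is the integral of the first variation plus
  \<open>O(h^(2s))\<close> times \<open>h\<close>. By the Euler-Lagrange equation the first variation is the exact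
  derivative of \<open>dL/dv (qEL, qEL') (qhat - qEL)\<close>, which vanishes at both ends, so it integrates
  to zero.\<close>

lemma linear_functional_abs_le:
  fixes f :: "'a::euclidean_space \<Rightarrow> real"
  assumes "linear f"
  shows "\<bar>f w\<bar> \<le> norm w * (\<Sum>b\<in>Basis. \<bar>f b\<bar>)"
proof -
  have "\<bar>f w\<bar> = \<bar>\<Sum>b\<in>Basis. (w \<bullet> b) * f b\<bar>"
    using Linear_Algebra.linear_componentwise[OF assms, of w 1] by simp
  also have "\<dots> \<le> (\<Sum>b\<in>Basis. \<bar>w \<bullet> b\<bar> * \<bar>f b\<bar>)"
    by (rule order_trans[OF sum_abs]) (simp add: abs_mult)
  also have "\<dots> \<le> (\<Sum>b\<in>Basis. norm w * \<bar>f b\<bar>)"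
    by (intro sum_mono mult_right_mono Basis_le_norm) auto
  finally show ?thesis by (simp add: sum_distrib_left)
qed

lemma linearization_error_le:
  fixes f :: "'a::{real_normed_vector, perfect_space} \<Rightarrow> 'b::real_normed_vector"
  assumes S: "convex S" "p \<in> S" "p + \<Delta> \<in> S" and "K \<ge> 0"
    and deriv: "\<And>x. x \<in> S \<Longrightarrow> (f has_derivative f' x) (at x within S)"
    and lip: "\<And>x y w. x \<in> S \<Longrightarrow> y \<in> S \<Longrightarrow> norm (f' x w - f' y w) \<le> K * norm (x - y) * norm w"
  shows "norm (f (p + \<Delta>) - f p - f' p \<Delta>) \<le> K * (norm \<Delta>)\<^sup>2"
proof -
  let ?I = "closed_segment p (p + \<Delta>)"
  have seg: "?I \<subseteq> S" by (rule closed_segment_subset[OF S(2,3,1)])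
  have "norm (f (p + \<Delta>) - f p - f' p (p + \<Delta> - p)) \<le> norm (p + \<Delta> - p) * (K * norm \<Delta>)"
  proof (rule differentiable_bound_linearization[where S="?I"])
    show "p + t *\<^sub>R (p + \<Delta> - p) \<in> ?I" if "t \<in> {0..1}" for t
      using that by (auto simp: closed_segment_def algebra_simps intro!: exI[of _ t])
    show "(f has_derivative f' x) (at x within ?I)" if "x \<in> ?I" for x
      using deriv that seg by (blast intro: has_derivative_subset)
    show "onorm (f' x - f' p) \<le> K * norm \<Delta>" if x: "x \<in> ?I" for x
    proof (rule onorm_le)
      fix w
      have "norm (x - p) \<le> norm \<Delta>" using segment_bound(1)[OF x] by simp
      then have "norm (f' x w - f' p w) \<le> K * norm \<Delta> * norm w"
        using lip[of x p w] x seg S(2) \<open>K \<ge> 0\<close>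
        by (smt (verit, best) mult_right_mono norm_ge_zero mult_left_mono subsetD)
      then show "norm ((f' x - f' p) w) \<le> K * norm \<Delta> * norm w" by simp
    qed
  qed auto
  then show ?thesis by (simp add: power2_eq_square mult_ac)
qed

lemma lipschitz_on_compact_convex_if_continuous_partials:
  fixes g :: "'a::euclidean_space \<Rightarrow> real"
  assumes S: "compact S" "convex S"
    and deriv: "\<And>x. x \<in> S \<Longrightarrow> (g has_derivative g' x) (at x within S)"
    and cont: "\<And>b. b \<in> Basis \<Longrightarrow> continuous_on S (\<lambda>x. g' x b)"
  shows "\<exists>K\<ge>0. \<forall>x\<in>S. \<forall>y\<in>S. \<bar>g x - g y\<bar> \<le> K * norm (x - y)"
proof -
  have "continuous_on S (\<lambda>x. \<Sum>b\<in>Basis. \<bar>g' x b\<bar>)"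
    by (intro continuous_intros cont)
  then have "bounded ((\<lambda>x. \<Sum>b\<in>Basis. \<bar>g' x b\<bar>) ` S)"
    using compact_continuous_image S(1) compact_imp_bounded by blast
  then obtain M where M: "\<And>x. x \<in> S \<Longrightarrow> norm (\<Sum>b\<in>Basis. \<bar>g' x b\<bar>) \<le> M" and "M > 0"
    unfolding bounded_pos by auto
  have "\<bar>g x - g y\<bar> \<le> M * norm (x - y)" if "x \<in> S" "y \<in> S" for x y
  proof -
    have "norm (g x - g y) \<le> M * norm (x - y)"
    proof (rule differentiable_bound[OF S(2) deriv _ that])
      fix z assume z: "z \<in> S"
      have lin: "linear (g' z)"
        using deriv[OF z] has_derivative_bounded_linear bounded_linear.linear by blast
      show "onorm (g' z) \<le> M"
      proof (rule onorm_le)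
        fix w
        have "\<bar>g' z w\<bar> \<le> norm w * (\<Sum>b\<in>Basis. \<bar>g' z b\<bar>)" by (rule linear_functional_abs_le[OF lin])
        also have "\<dots> \<le> norm w * M" using M[OF z] by (intro mult_left_mono) auto
        finally show "norm (g' z w) \<le> M * norm w" by (simp add: mult.commute)
      qed
    qed
    then show ?thesis by simp
  qed
  then show ?thesis using \<open>M > 0\<close> by (intro exI[of _ M]) auto
qed

lemma smooth_map_differentiable:
  assumes "smooth_map f"
  shows "f differentiable (at x)"
  using assms unfolding smooth_map_def differentiable_def by metis

lemma smooth_map_taylor2:
  fixes L :: "'a::euclidean_space \<Rightarrow> real"
  assumes "smooth_map L"
  shows "\<exists>C\<ge>0. \<forall>p \<Delta>. norm p \<le> R \<longrightarrow> norm (p + \<Delta>) \<le> R \<longrightarrow>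
     \<bar>L (p + \<Delta>) - L p - frechet_derivative L (at p) \<Delta>\<bar> \<le> C * (norm \<Delta>)\<^sup>2"
proof -
  obtain D :: "'a list \<Rightarrow> 'a \<Rightarrow> real" where D0: "D [] = L"
    and Dd: "\<And>vs x. (D vs has_derivative (\<lambda>v. D (v # vs) x)) (at x)"
    using assms unfolding smooth_map_def by blast
  define S :: "'a set" where "S = cball 0 R"
  have S: "compact S" "convex S" by (auto simp: S_def)
  have lin: "linear (\<lambda>v. D (v # vs) x)" for vs x
    using Dd has_derivative_bounded_linear bounded_linear.linear by blast
  have "\<forall>b\<in>Basis. \<exists>K\<ge>0. \<forall>x\<in>S. \<forall>y\<in>S. \<bar>D [b] x - D [b] y\<bar> \<le> K * norm (x - y)"
  proof
    fix b :: 'a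
    show "\<exists>K\<ge>0. \<forall>x\<in>S. \<forall>y\<in>S. \<bar>D [b] x - D [b] y\<bar> \<le> K * norm (x - y)"
    proof (rule lipschitz_on_compact_convex_if_continuous_partials[OF S])
      show "(D [b] has_derivative (\<lambda>w. D [w, b] x)) (at x within S)" for x
        using Dd has_derivative_at_withinI by blast
      show "continuous_on S (\<lambda>x. D [b', b] x)" for b'
        using Dd has_derivative_continuous continuous_at_imp_continuous_on by blast
    qed
  qed
  then obtain K where K: "\<And>b. b \<in> Basis \<Longrightarrow> K b \<ge> 0"
    and K_lip: "\<And>b x y. b \<in> Basis \<Longrightarrow> x \<in> S \<Longrightarrow> y \<in> S \<Longrightarrow> \<bar>D [b] x - D [b] y\<bar> \<le> K b * norm (x - y)"
    by metis
  define C where "C = (\<Sum>b\<in>Basis. K b)"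
  have C: "C \<ge> 0" unfolding C_def using K by (simp add: sum_nonneg)
  have D1_lip: "norm (D [w] x - D [w] y) \<le> C * norm (x - y) * norm w"
    if "x \<in> S" "y \<in> S" for x y w
  proof -
    have "linear (\<lambda>w. D [w] x - D [w] y)" using lin by (intro linear_compose_sub) auto
    then have "\<bar>D [w] x - D [w] y\<bar> \<le> norm w * (\<Sum>b\<in>Basis. \<bar>D [b] x - D [b] y\<bar>)"
      by (rule linear_functional_abs_le)
    also have "\<dots> \<le> norm w * (\<Sum>b\<in>Basis. K b * norm (x - y))"
      using K_lip that by (intro mult_left_mono sum_mono) auto
    finally show ?thesis by (simp add: C_def sum_distrib_right mult_ac)
  qed
  show ?thesis
  proof (intro exI[of _ C] conjI allI impI C)
    fix p \<Delta> :: 'a assume "norm p \<le> R" "norm (p + \<Delta>) \<le> R"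
    then have pS: "p \<in> S" "p + \<Delta> \<in> S" by (auto simp: S_def)
    have "(L has_derivative (\<lambda>w. D [w] x)) (at x within S)" for x
      using Dd[of "[]" x] D0 has_derivative_at_withinI by auto
    from linearization_error_le[OF S(2) pS C this D1_lip]
    have "\<bar>L (p + \<Delta>) - L p - D [\<Delta>] p\<bar> \<le> C * (norm \<Delta>)\<^sup>2" by simp
    moreover have "frechet_derivative L (at p) = (\<lambda>w. D [w] p)"
      using frechet_derivative_at[OF Dd[of "[]" p]] D0 by simp
    ultimately show "\<bar>L (p + \<Delta>) - L p - frechet_derivative L (at p) \<Delta>\<bar> \<le> C * (norm \<Delta>)\<^sup>2" by simp
  qed
qed

lemma polynomial_has_derivative_tower:
  fixes c :: "nat \<Rightarrow> 'a::real_normed_vector"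
  shows "\<exists>P. P 0 = (\<lambda>t. \<Sum>j\<le>n. t ^ j *\<^sub>R c j)
     \<and> (\<forall>k t. (P k has_vector_derivative P (Suc k) t) (at t))
     \<and> (\<forall>k>n. \<forall>t. P k t = 0)"
proof (induction n arbitrary: c)
  case 0
  define P :: "nat \<Rightarrow> real \<Rightarrow> 'a" where "P k = (if k = 0 then (\<lambda>t. c 0) else (\<lambda>t. 0))" for k
  show ?case
    by (rule exI[of _ P]) (auto simp: P_def intro!: derivative_eq_intros)
next
  case (Suc n)
  obtain P where P: "P 0 = (\<lambda>t. \<Sum>j\<le>n. t ^ j *\<^sub>R (real (Suc j) *\<^sub>R c (Suc j)))"
    "\<forall>k t. (P k has_vector_derivative P (Suc k) t) (at t)" "\<forall>k>n. \<forall>t. P k t = 0"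
    using Suc[of "\<lambda>j. real (Suc j) *\<^sub>R c (Suc j)"] by blast
  define Q where "Q k = (if k = 0 then (\<lambda>t. \<Sum>j\<le>Suc n. t ^ j *\<^sub>R c j) else P (k - 1))" for k
  have shift: "(\<lambda>t. \<Sum>j\<le>Suc n. t ^ j *\<^sub>R c j) = (\<lambda>t. c 0 + (\<Sum>j\<le>n. t ^ Suc j *\<^sub>R c (Suc j)))"
    by (simp only: sum.atMost_Suc_shift) simp
  have Q0: "(Q 0 has_vector_derivative P 0 t) (at t)" for t
  proof -
    have "((\<lambda>t. t ^ Suc j *\<^sub>R c (Suc j)) has_vector_derivative
        t ^ j *\<^sub>R (real (Suc j) *\<^sub>R c (Suc j))) (at t)" for j
      by (auto intro!: derivative_eq_intros simp: algebra_simps) (metis Suc_pred power_Suc)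
    then have "((\<lambda>t. \<Sum>j\<le>n. t ^ Suc j *\<^sub>R c (Suc j)) has_vector_derivative
        (\<Sum>j\<le>n. t ^ j *\<^sub>R (real (Suc j) *\<^sub>R c (Suc j)))) (at t)"
      by (intro has_vector_derivative_sum)
    moreover have "Q 0 = (\<lambda>t. c 0 + (\<Sum>j\<le>n. t ^ Suc j *\<^sub>R c (Suc j)))"
      unfolding Q_def shift by simp
    ultimately show ?thesis
      using has_vector_derivative_add[OF has_vector_derivative_const[of "c 0"]]
      unfolding P(1) by fastforce
  qed
  show ?case
  proof (rule exI[of _ Q], intro conjI allI impI)
    fix k t show "(Q k has_vector_derivative Q (Suc k) t) (at t)"
      using P(2) Q0 by (cases k) (auto simp: Q_def)
  next
    fix k :: nat and t assume "k > Suc n" then show "Q k t = 0"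
      using P(3) by (auto simp: Q_def)
  qed (simp add: Q_def)
qed

lemma real_derivative_zero_between:
  fixes f f' :: "real \<Rightarrow> real"
  assumes der: "\<And>t. t \<in> {0..h} \<Longrightarrow> (f has_real_derivative f' t) (at t within {0..h})"
    and ab: "0 \<le> a" "a < b" "b \<le> h" and fab: "f a = 0" "f b = 0"
  shows "\<exists>z. a < z \<and> z < b \<and> f' z = 0"
proof -
  have "continuous_on {0..h} f"
    using der by (meson DERIV_continuous continuous_on_eq_continuous_within)
  then have cont: "continuous_on {a..b} f" by (rule continuous_on_subset) (use ab in auto)
  have deriv: "(f has_derivative (*) (f' x)) (at x)" if "a < x" "x < b" for x
  proof -
    have "at x within {0..h} = at x"
      using that ab by (intro at_within_interior) auto
    then show ?thesis using der[of x] that ab by (auto simp: has_field_derivative_def)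
  qed
  obtain z where "a < z" "z < b" "(*) (f' z) = (\<lambda>v. 0)"
    using Rolle_deriv[OF ab(2) _ cont deriv] fab by auto
  then show ?thesis by (metis mult_cancel_left1)
qed

lemma derivative_tower_zeros:
  fixes F :: "nat \<Rightarrow> real \<Rightarrow> real"
  assumes der: "\<And>k t. t \<in> {0..h} \<Longrightarrow> (F k has_real_derivative F (Suc k) t) (at t within {0..h})"
    and z: "\<forall>i<s. z i < z (Suc i)" "\<forall>i\<le>s. z i \<in> {0..h}" "\<forall>i\<le>s. F 0 (z i) = 0"
  shows "k \<le> s \<Longrightarrow> \<exists>w. (\<forall>i<s-k. w i < w (Suc i)) \<and> (\<forall>i\<le>s-k. w i \<in> {0..h} \<and> F k (w i) = 0)"
proof (induction k)
  case 0
  then show ?case using z by (intro exI[of _ z]) auto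
next
  case (Suc k)
  then obtain w where w: "\<forall>i<s-k. w i < w (Suc i)" "\<forall>i\<le>s-k. w i \<in> {0..h} \<and> F k (w i) = 0"
    by auto
  have "\<exists>y. w i < y \<and> y < w (Suc i) \<and> F (Suc k) y = 0" if "i < s - k" for i
    using real_derivative_zero_between[of h "F k" "F (Suc k)" "w i" "w (Suc i)"] der w that by auto
  then obtain w' where w': "\<And>i. i < s - k \<Longrightarrow> w i < w' i \<and> w' i < w (Suc i) \<and> F (Suc k) (w' i) = 0"
    by metis
  show ?case
  proof (intro exI[of _ w'] conjI allI impI)
    fix i assume "i < s - Suc k"
    then show "w' i < w' (Suc i)" using w'[of i] w'[of "Suc i"] by force
  next
    fix i assume "i \<le> s - Suc k"
    then have i: "i < s - k" using Suc.prems by auto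
    moreover have "w i \<in> {0..h}" "w (Suc i) \<in> {0..h}" using w(2) i by auto
    ultimately show "w' i \<in> {0..h}" using w'[OF i] by auto
    show "F (Suc k) (w' i) = 0" using w'[OF i] by simp
  qed
qed

lemma derivative_tower_bound_if_zeros:
  fixes F :: "nat \<Rightarrow> real \<Rightarrow> real"
  assumes der: "\<And>k t. t \<in> {0..h} \<Longrightarrow> (F k has_real_derivative F (Suc k) t) (at t within {0..h})"
    and z: "\<forall>i<s. z i < z (Suc i)" "\<forall>i\<le>s. z i \<in> {0..h}" "\<forall>i\<le>s. F 0 (z i) = 0"
    and M: "\<And>t. t \<in> {0..h} \<Longrightarrow> \<bar>F (Suc s) t\<bar> \<le> M"
  shows "k \<le> Suc s \<Longrightarrow> t \<in> {0..h} \<Longrightarrow> \<bar>F k t\<bar> \<le> M * h ^ (Suc s - k)"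
proof (induction "Suc s - k" arbitrary: k t)
  case 0
  then show ?case using M by simp
next
  case (Suc j)
  then have k: "k \<le> s" "Suc s - Suc k = j" by auto
  have "M \<ge> 0" using M[of t] Suc.prems by linarith
  obtain w where "w 0 \<in> {0..h}" "F k (w 0) = 0"
    using derivative_tower_zeros[OF der z k(1)] by auto
  moreover have "norm (F k t - F k (w 0)) \<le> (M * h ^ j) * norm (t - w 0)"
  proof (rule differentiable_bound[where f'="\<lambda>x. (*) (F (Suc k) x)"])
    fix x assume x: "x \<in> {0..h}"
    show "(F k has_derivative (*) (F (Suc k) x)) (at x within {0..h})"
      using der[OF x, of k] by (simp add: has_field_derivative_def)
    show "onorm ((*) (F (Suc k) x)) \<le> M * h ^ j"
      using Suc.hyps(1)[of "Suc k" x] k x by (intro onorm_le) (auto simp: abs_mult mult.commute intro: mult_left_mono)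
  qed (use Suc.prems \<open>w 0 \<in> {0..h}\<close> in auto)
  moreover have "(M * h ^ j) * norm (t - w 0) \<le> (M * h ^ j) * h"
    using Suc.prems \<open>w 0 \<in> {0..h}\<close> \<open>M \<ge> 0\<close> by (intro mult_left_mono) auto
  ultimately have "\<bar>F k t\<bar> \<le> M * h ^ Suc j" by (simp add: mult_ac)
  then show ?case by (simp only: Suc.hyps(2))
qed

lemma vector_derivative_tower_bound_if_zeros:
  fixes F :: "nat \<Rightarrow> real \<Rightarrow> 'a::euclidean_space"
  assumes der: "\<And>k t. t \<in> {0..h} \<Longrightarrow> (F k has_vector_derivative F (Suc k) t) (at t within {0..h})"
    and z: "\<forall>i<s. z i < z (Suc i)" "\<forall>i\<le>s. z i \<in> {0..h}" "\<forall>i\<le>s. F 0 (z i) = 0"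
    and M: "\<And>t. t \<in> {0..h} \<Longrightarrow> norm (F (Suc s) t) \<le> M"
    and k: "k \<le> Suc s" and t: "t \<in> {0..h}"
  shows "norm (F k t) \<le> real DIM('a) * M * h ^ (Suc s - k)"
proof -
  have "\<bar>F k t \<bullet> b\<bar> \<le> M * h ^ (Suc s - k)" if b: "b \<in> Basis" for b
  proof (rule derivative_tower_bound_if_zeros[where F="\<lambda>k t. F k t \<bullet> b" and z=z])
    show "((\<lambda>t. F k t \<bullet> b) has_real_derivative F (Suc k) t \<bullet> b) (at t within {0..h})"
      if "t \<in> {0..h}" for k t
      unfolding has_real_derivative_iff_has_vector_derivative
      by (rule bounded_linear.has_vector_derivative[OF bounded_linear_inner_left der[OF that]])
    show "\<bar>F (Suc s) t \<bullet> b\<bar> \<le> M" if "t \<in> {0..h}" for t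
      using Basis_le_norm[OF b, of "F (Suc s) t"] M[OF that] by linarith
  qed (use z k t in auto)
  then have "norm (F k t) \<le> (\<Sum>b\<in>(Basis::'a set). M * h ^ (Suc s - k))"
    by (intro order_trans[OF norm_le_l1] sum_mono) auto
  then show ?thesis by simp
qed

lemma strictly_increasing_node_bounds:
  fixes z :: "nat \<Rightarrow> real"
  assumes z: "\<forall>i<s. z i < z (Suc i)" and "i \<le> s"
  shows "z 0 \<le> z i" "z i \<le> z s"
proof -
  have step: "z j \<le> z (Suc j)" if "j < s" for j using z that by (simp add: less_imp_le)
  show "z 0 \<le> z i"
    using \<open>i \<le> s\<close> by (induction i) (auto intro: order_trans[OF _ step] simp: Suc_le_eq)
  show "z i \<le> z s"
    using \<open>i \<le> s\<close> by (induction rule: inc_induct) (auto intro: order_trans[OF step])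
qed

lemma curve_derivs_has_vector_derivative:
  assumes "curve_derivs S f Dk" "t \<in> S"
  shows "(Dk k has_vector_derivative Dk (Suc k) t) (at t within S)"
    and "(f has_vector_derivative Dk 1 t) (at t within S)"
proof -
  show "(Dk k has_vector_derivative Dk (Suc k) t) (at t within S)" for k
    using assms unfolding curve_derivs_def by blast
  from this[of 0] show "(f has_vector_derivative Dk 1 t) (at t within S)"
    using assms unfolding curve_derivs_def
    by (intro has_vector_derivative_transform[of t S f "Dk 0"]) auto
qed

definition euler_lagrange_on :: "('a::real_normed_vector \<times> 'a \<Rightarrow> real) \<Rightarrow> real set \<Rightarrow> (real \<Rightarrow> 'a) \<Rightarrow> bool" where
  "euler_lagrange_on L S x \<longleftrightarrow> (\<forall>w. \<forall>t\<in>S.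
     ((\<lambda>\<tau>. dLdv L (x \<tau>) (vector_derivative x (at \<tau> within S)) w)
        has_real_derivative dLdq L (x t) (vector_derivative x (at t within S)) w) (at t within S))"

lemma frechet_derivative_Pair_eq_sum:
  fixes L :: "'a::euclidean_space \<times> 'a \<Rightarrow> real"
  assumes "L differentiable (at (q, u))"
  shows "frechet_derivative L (at (q, u)) (a, v)
    = (\<Sum>b\<in>Basis. (a \<bullet> b) * dLdq L q u b + (v \<bullet> b) * dLdv L q u b)"
proof -
  let ?f = "frechet_derivative L (at (q, u))"
  have bl: "bounded_linear ?f"
    using assms frechet_derivative_works has_derivative_bounded_linear by blast
  have lin: "linear (\<lambda>a. ?f (a, 0))" "linear (\<lambda>v. ?f (0, v))"
    using bounded_linear_compose[OF bl bounded_linear_Pair[OF bounded_linear_ident bounded_linear_zero]]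
      bounded_linear_compose[OF bl bounded_linear_Pair[OF bounded_linear_zero bounded_linear_ident]]
    by (simp_all add: bounded_linear.linear)
  then have "?f (a, 0) = (\<Sum>b\<in>Basis. (a \<bullet> b) * dLdq L q u b)"
    and "?f (0, v) = (\<Sum>b\<in>Basis. (v \<bullet> b) * dLdv L q u b)"
    using Linear_Algebra.linear_componentwise[OF lin(1), of a 1]
      Linear_Algebra.linear_componentwise[OF lin(2), of v 1] by (simp_all add: dLdq_def dLdv_def)
  moreover have "?f (a, v) = ?f (a, 0) + ?f (0, v)"
    using linear_add[OF bounded_linear.linear[OF bl], of "(a, 0)" "(0, v)"] by simp
  ultimately show ?thesis by (simp add: sum.distrib)
qed

lemma euler_lagrange_first_variation_eq_0:
  fixes L :: "'a::euclidean_space \<times> 'a \<Rightarrow> real"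
  assumes L: "\<And>p. L differentiable (at p)" and "0 < h"
    and EL: "euler_lagrange_on L {0..h} x"
    and x: "\<And>t. t \<in> {0..h} \<Longrightarrow> (x has_vector_derivative x' t) (at t within {0..h})"
    and e: "\<And>t. t \<in> {0..h} \<Longrightarrow> (e has_vector_derivative e' t) (at t within {0..h})"
    and e_bc: "e 0 = 0" "e h = 0"
  shows "((\<lambda>t. frechet_derivative L (at (x t, x' t)) (e t, e' t)) has_integral 0) {0..h}"
proof -
  have vx: "vector_derivative x (at t within {0..h}) = x' t" if "t \<in> {0..h}" for t
    using vector_derivative_within_closed_interval[OF \<open>0 < h\<close> that x[OF that]] .
  define G where "G t = (\<Sum>b\<in>Basis. (e t \<bullet> b) * dLdv L (x t) (vector_derivative x (at t within {0..h})) b)" for t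
  have "(G has_real_derivative frechet_derivative L (at (x t, x' t)) (e t, e' t)) (at t within {0..h})"
    if t: "t \<in> {0..h}" for t
  proof -
    have "((\<lambda>t. e t \<bullet> b) has_real_derivative e' t \<bullet> b) (at t within {0..h})" for b
      unfolding has_real_derivative_iff_has_vector_derivative
      by (rule bounded_linear.has_vector_derivative[OF bounded_linear_inner_left e[OF t]])
    moreover have "((\<lambda>t. dLdv L (x t) (vector_derivative x (at t within {0..h})) b)
        has_real_derivative dLdq L (x t) (vector_derivative x (at t within {0..h})) b) (at t within {0..h})" for b
      using EL t unfolding euler_lagrange_on_def by blast
    ultimately have "(G has_real_derivative (\<Sum>b\<in>Basis.
        (e t \<bullet> b) * dLdq L (x t) (vector_derivative x (at t within {0..h})) b
        + (e' t \<bullet> b) * dLdv L (x t) (vector_derivative x (at t within {0..h})) b)) (at t within {0..h})"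
      unfolding G_def by (intro DERIV_sum DERIV_mult')
    then show ?thesis
      by (simp add: frechet_derivative_Pair_eq_sum[OF L] vx[OF t])
  qed
  then have "((\<lambda>t. frechet_derivative L (at (x t, x' t)) (e t, e' t)) has_integral G h - G 0) {0..h}"
    using \<open>0 < h\<close> by (intro fundamental_theorem_of_calculus)
      (auto simp: has_real_derivative_iff_has_vector_derivative)
  then show ?thesis by (simp add: G_def e_bc)
qed

lemma action_has_integral:
  assumes L: "continuous_on UNIV L" and "0 < h"
    and x: "\<And>t. t \<in> {0..h} \<Longrightarrow> (x has_vector_derivative x' t) (at t within {0..h})"
    and x': "continuous_on {0..h} x'"
  shows "((\<lambda>t. L (x t, x' t)) has_integral action L h x) {0..h}"
proof -
  have "continuous_on {0..h} x"
    using x has_vector_derivative_continuous unfolding continuous_on_eq_continuous_within by blast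
  then have "continuous_on {0..h} (\<lambda>t. L (x t, x' t))"
    by (intro continuous_on_compose2[OF L] continuous_on_Pair x') auto
  then have "((\<lambda>t. L (x t, x' t)) has_integral integral {0..h} (\<lambda>t. L (x t, x' t))) {0..h}"
    by (rule integrable_integral[OF integrable_continuous_interval])
  moreover have "integral {0..h} (\<lambda>t. L (x t, x' t)) = action L h x"
    unfolding action_def
    using vector_derivative_within_closed_interval[OF \<open>0 < h\<close> _ x] by (intro integral_cong) auto
  ultimately show ?thesis by simp
qed

lemma action_difference_le:
  fixes L :: "'a::euclidean_space \<times> 'a \<Rightarrow> real"
  assumes L: "\<And>p. L differentiable (at p)"
    and taylor: "\<forall>p \<Delta>. norm p \<le> R \<longrightarrow> norm (p + \<Delta>) \<le> R \<longrightarrow>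
        \<bar>L (p + \<Delta>) - L p - frechet_derivative L (at p) \<Delta>\<bar> \<le> C * (norm \<Delta>)\<^sup>2"
    and "C \<ge> 0" and "0 < h"
    and EL: "euler_lagrange_on L {0..h} x"
    and x: "\<And>t. t \<in> {0..h} \<Longrightarrow> (x has_vector_derivative x' t) (at t within {0..h})"
      "continuous_on {0..h} x'"
    and y: "\<And>t. t \<in> {0..h} \<Longrightarrow> (y has_vector_derivative y' t) (at t within {0..h})"
      "continuous_on {0..h} y'"
    and bc: "y 0 = x 0" "y h = x h"
    and inside: "\<And>t. t \<in> {0..h} \<Longrightarrow> norm (x t, x' t) + \<delta> \<le> R"
    and close: "\<And>t. t \<in> {0..h} \<Longrightarrow> norm (y t - x t, y' t - x' t) \<le> \<delta>"
  shows "\<bar>action L h x - action L h y\<bar> \<le> C * \<delta>\<^sup>2 * h"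
proof -
  define T where "T t = frechet_derivative L (at (x t, x' t)) (y t - x t, y' t - x' t)" for t
  have "continuous_on UNIV L"
    using L differentiable_imp_continuous_within continuous_at_imp_continuous_on by blast
  then have I: "((\<lambda>t. L (y t, y' t) - L (x t, x' t) - T t) has_integral action L h y - action L h x - 0) {0..h}"
    unfolding T_def using \<open>0 < h\<close> x y bc
    by (intro has_integral_diff action_has_integral euler_lagrange_first_variation_eq_0[OF L _ EL])
      (auto intro: has_vector_derivative_diff)
  have bound: "norm (L (y t, y' t) - L (x t, x' t) - T t) \<le> C * \<delta>\<^sup>2" if t: "t \<in> {0..h}" for t
  proof -
    have "\<delta> \<ge> 0" using close[OF t] norm_ge_zero order_trans by blast
    moreover have "norm ((x t, x' t) + (y t - x t, y' t - x' t)) \<le> norm (x t, x' t) + norm (y t - x t, y' t - x' t)"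
      by (rule norm_triangle_ineq)
    ultimately have "norm (x t, x' t) \<le> R" "norm ((x t, x' t) + (y t - x t, y' t - x' t)) \<le> R"
      using inside[OF t] close[OF t] by linarith+
    from taylor[rule_format, OF this]
    have "norm (L (y t, y' t) - L (x t, x' t) - T t) \<le> C * (norm (y t - x t, y' t - x' t))\<^sup>2"
      by (simp add: T_def)
    also have "\<dots> \<le> C * \<delta>\<^sup>2"
      using close[OF t] \<open>C \<ge> 0\<close> by (intro mult_left_mono power_mono) auto
    finally show ?thesis .
  qed
  have "C * \<delta>\<^sup>2 \<ge> 0" using \<open>C \<ge> 0\<close> by simp
  from has_integral_bound_real[where S="{}", OF this _ I] bound
  have "norm (action L h y - action L h x) \<le> C * \<delta>\<^sup>2 * h"
    using \<open>0 < h\<close> by simp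
  then show ?thesis by (simp add: abs_minus_commute)
qed

lemma polynomial_interpolation_error_le:
  fixes x :: "real \<Rightarrow> 'a::euclidean_space" and z :: "nat \<Rightarrow> real"
  assumes E: "curve_derivs {0..h} x E"
    and y: "y = (\<lambda>t. \<Sum>j\<le>s. t ^ j *\<^sub>R c j)"
    and z: "\<forall>i<s. z i < z (Suc i)" "\<forall>i\<le>s. z i \<in> {0..h}"
    and interp: "\<And>i. i \<le> s \<Longrightarrow> y (z i) = x (z i)"
    and Ms: "\<And>t. t \<in> {0..h} \<Longrightarrow> norm (E (Suc s) t) \<le> Ms"
  obtains y' where "\<And>t. (y has_vector_derivative y' t) (at t)" "continuous_on UNIV y'"
    "\<And>t. t \<in> {0..h} \<Longrightarrow> norm (y t - x t) \<le> real DIM('a) * Ms * h ^ Suc s"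
    "\<And>t. t \<in> {0..h} \<Longrightarrow> norm (y' t - E 1 t) \<le> real DIM('a) * Ms * h ^ s"
proof -
  obtain P where P0: "P 0 = y" and P: "\<And>k t. (P k has_vector_derivative P (Suc k) t) (at t)"
    and P_deg: "\<And>t. P (Suc s) t = 0"
    using polynomial_has_derivative_tower[where n=s and c=c] unfolding y by blast
  have Ex: "E 0 t = x t" if "t \<in> {0..h}" for t using E that unfolding curve_derivs_def by blast
  define F where "F k t = P k t - E k t" for k t
  have F_err: "norm (F k t) \<le> real DIM('a) * Ms * h ^ (Suc s - k)" if "k \<le> Suc s" "t \<in> {0..h}" for k t
  proof (rule vector_derivative_tower_bound_if_zeros[OF _ z _ _ that])
    show "(F k has_vector_derivative F (Suc k) t) (at t within {0..h})" if "t \<in> {0..h}" for k t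
      unfolding F_def using has_vector_derivative_at_within[OF P]
        curve_derivs_has_vector_derivative(1)[OF E that] by (rule has_vector_derivative_diff)
    show "\<forall>i\<le>s. F 0 (z i) = 0" using interp z(2) Ex by (simp add: F_def P0)
    show "norm (F (Suc s) t) \<le> Ms" if "t \<in> {0..h}" for t
      using Ms[OF that] by (simp add: F_def P_deg)
  qed
  show thesis
  proof
    show "(y has_vector_derivative P 1 t) (at t)" for t using P[of 0 t] by (simp add: P0)
    show "continuous_on UNIV (P 1)"
      using P by (blast intro: continuous_at_imp_continuous_on has_vector_derivative_continuous)
    show "norm (y t - x t) \<le> real DIM('a) * Ms * h ^ Suc s" if "t \<in> {0..h}" for t
      using F_err[OF _ that, of 0] Ex[OF that] by (simp add: F_def P0)
    show "norm (P 1 t - E 1 t) \<le> real DIM('a) * Ms * h ^ s" if "t \<in> {0..h}" for t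
      using F_err[OF _ that, of 1] by (simp add: F_def)
  qed
qed

lemma action_interpolant_error_le:
  fixes L :: "'a::euclidean_space \<times> 'a \<Rightarrow> real"
    and h C M0 M1 Ms :: real and z :: "nat \<Rightarrow> real"
  assumes L: "\<And>p. L differentiable (at p)"
    and taylor: "\<forall>p \<Delta>. norm p \<le> M0 + M1 + 2 * real DIM('a) * Ms \<longrightarrow>
        norm (p + \<Delta>) \<le> M0 + M1 + 2 * real DIM('a) * Ms \<longrightarrow>
        \<bar>L (p + \<Delta>) - L p - frechet_derivative L (at p) \<Delta>\<bar> \<le> C * (norm \<Delta>)\<^sup>2"
    and "C \<ge> 0" and h: "0 < h" "h \<le> 1"
    and E: "curve_derivs {0..h} x E" and EL: "euler_lagrange_on L {0..h} x"
    and y: "y = (\<lambda>t. \<Sum>j\<le>s. t ^ j *\<^sub>R c j)"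
    and z: "\<forall>i<s. z i < z (Suc i)" "z 0 = 0" "z s = h"
    and interp: "\<And>i. i \<le> s \<Longrightarrow> y (z i) = x (z i)"
    and bounds: "\<And>t. t \<in> {0..h} \<Longrightarrow> norm (E 0 t) \<le> M0"
      "\<And>t. t \<in> {0..h} \<Longrightarrow> norm (E 1 t) \<le> M1"
      "\<And>t. t \<in> {0..h} \<Longrightarrow> norm (E (Suc s) t) \<le> Ms"
  shows "\<bar>action L h x - action L h y\<bar> \<le> C * (2 * real DIM('a) * Ms)\<^sup>2 * h ^ (2 * s + 1)"
proof -
  define n where "n = real DIM('a)"
  note taylor = taylor[folded n_def]
  have "\<forall>i\<le>s. z i \<in> {0..h}" using strictly_increasing_node_bounds[OF z(1)] z(2,3) by auto
  then obtain y' where y': "\<And>t. (y has_vector_derivative y' t) (at t)" "continuous_on UNIV y'"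
    and err: "\<And>t. t \<in> {0..h} \<Longrightarrow> norm (y t - x t) \<le> n * Ms * h ^ Suc s"
      "\<And>t. t \<in> {0..h} \<Longrightarrow> norm (y' t - E 1 t) \<le> n * Ms * h ^ s"
    using polynomial_interpolation_error_le[OF E y z(1) _ interp bounds(3)] unfolding n_def by metis
  have "norm (E (Suc s) 0) \<le> Ms" using bounds(3)[of 0] h by simp
  then have "Ms \<ge> 0" by (rule order_trans[OF norm_ge_zero])
  then have "n * Ms \<ge> 0" by (simp add: n_def)
  define \<delta> where "\<delta> = 2 * n * Ms * h ^ s"
  have close: "norm (y t - x t, y' t - E 1 t) \<le> \<delta>" if t: "t \<in> {0..h}" for t
  proof -
    have "n * Ms * h ^ Suc s \<le> n * Ms * h ^ s"
      using h \<open>n * Ms \<ge> 0\<close> by (intro mult_left_mono power_decreasing) auto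
    then show ?thesis
      using norm_Pair_le[of "y t - x t" "y' t - E 1 t"] err[OF t] unfolding \<delta>_def by linarith
  qed
  have inside: "norm (x t, E 1 t) + \<delta> \<le> M0 + M1 + 2 * n * Ms" if t: "t \<in> {0..h}" for t
  proof -
    have "\<delta> \<le> 2 * n * Ms"
      unfolding \<delta>_def using h \<open>n * Ms \<ge> 0\<close>
      by (intro mult_left_le power_le_one) (auto simp: mult.assoc)
    moreover have "x t = E 0 t" using E t unfolding curve_derivs_def by auto
    ultimately show ?thesis
      using norm_Pair_le[of "x t" "E 1 t"] bounds(1,2)[OF t] by simp
  qed
  have "\<bar>action L h x - action L h y\<bar> \<le> C * \<delta>\<^sup>2 * h"
  proof (rule action_difference_le[OF L taylor \<open>C \<ge> 0\<close> h(1) EL _ _ _ _ _ _ inside close])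
    show "(x has_vector_derivative E 1 t) (at t within {0..h})" if "t \<in> {0..h}" for t
      using curve_derivs_has_vector_derivative(2)[OF E that] .
    show "(y has_vector_derivative y' t) (at t within {0..h})" for t
      using has_vector_derivative_at_within[OF y'(1)] .
    show "continuous_on {0..h} (E 1)"
      unfolding continuous_on_eq_continuous_within
      using curve_derivs_has_vector_derivative(1)[OF E] by (blast intro: has_vector_derivative_continuous)
    show "continuous_on {0..h} y'" using y'(2) by (rule continuous_on_subset) simp
    show "y 0 = x 0" "y h = x h" using interp[of 0] interp[of s] z(2,3) by auto
  qed
  also have "C * \<delta>\<^sup>2 * h = C * (2 * n * Ms)\<^sup>2 * h ^ (2 * s + 1)"
    by (simp add: \<delta>_def power_mult_distrib power_mult[symmetric] power_add mult_ac)
  finally show ?thesis by (simp add: n_def)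
qed

theorem mainTheorem3:
  fixes L :: "'a::euclidean_space \<times> 'a \<Rightarrow> real"
    and s :: nat and d :: "nat \<Rightarrow> real"
    and q :: "real \<Rightarrow> 'a" and h0 h1 :: real
    and qEL :: "real \<Rightarrow> real \<Rightarrow> 'a" and qhat :: "real \<Rightarrow> real \<Rightarrow> 'a"
  assumes L_smooth: "smooth_map L"
    and s_pos: "s \<ge> 1"
    and d0: "d 0 = 0" and ds: "d s = 1"
    and d_mono: "\<forall>i<s. d i < d (Suc i)"
    and h0_pos: "0 < h0" and q_smooth: "smooth_curve_on {0..h0} q"
    and h1: "0 < h1" "h1 \<le> h0"
    and EL_smooth: "\<forall>h\<in>{0<..h1}. smooth_curve_on {0..h} (qEL h)"
    and EL_eq: "\<forall>h\<in>{0<..h1}. \<forall>w. \<forall>t\<in>{0..h}.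
        ((\<lambda>\<tau>. dLdv L (qEL h \<tau>) (vector_derivative (qEL h) (at \<tau> within {0..h})) w)
          has_real_derivative
          dLdq L (qEL h t) (vector_derivative (qEL h) (at t within {0..h})) w) (at t within {0..h})"
    and EL_bc: "\<forall>h\<in>{0<..h1}. qEL h 0 = q 0 \<and> qEL h h = q h"
    and EL_uniform: "\<exists>D :: real \<Rightarrow> nat \<Rightarrow> real \<Rightarrow> 'a.
        (\<forall>h\<in>{0<..h1}. curve_derivs {0..h} (qEL h) (D h)) \<and>
        (\<forall>k. \<exists>M. \<forall>h\<in>{0<..h1}. \<forall>t\<in>{0..h}. norm (D h k t) \<le> M)"
    and qhat_poly: "\<forall>h\<in>{0<..h1}. \<exists>c :: nat \<Rightarrow> 'a. \<forall>t. qhat h t = (\<Sum>j\<le>s. t ^ j *\<^sub>R c j)"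
    and qhat_interp: "\<forall>h\<in>{0<..h1}. \<forall>i\<le>s. qhat h (h * d i) = qEL h (h * d i)"
  shows "(\<lambda>h. action L h (qEL h) - action L h (qhat h)) \<in> O[at_right 0](\<lambda>h. h ^ (2 * s + 1))"
proof -
  \<comment> \<open>\<open>EL_bc\<close> is implied by interpolation at \<open>d 0\<close> and \<open>d s\<close>, and \<open>EL_smooth\<close> by \<open>EL_uniform\<close>.\<close>
  obtain D where D: "\<forall>h\<in>{0<..h1}. curve_derivs {0..h} (qEL h) (D h)"
    and D_bound: "\<forall>k. \<exists>M. \<forall>h\<in>{0<..h1}. \<forall>t\<in>{0..h}. norm (D h k t) \<le> M"
    using EL_uniform by blast
  obtain M where M: "\<And>k. \<forall>h\<in>{0<..h1}. \<forall>t\<in>{0..h}. norm (D h k t) \<le> M k"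
    using D_bound by metis
  obtain C where "C \<ge> 0" and taylor: "\<forall>p \<Delta>. norm p \<le> M 0 + M 1 + 2 * real DIM('a) * M (Suc s) \<longrightarrow>
      norm (p + \<Delta>) \<le> M 0 + M 1 + 2 * real DIM('a) * M (Suc s) \<longrightarrow>
      \<bar>L (p + \<Delta>) - L p - frechet_derivative L (at p) \<Delta>\<bar> \<le> C * (norm \<Delta>)\<^sup>2"
    using smooth_map_taylor2[OF L_smooth] by blast
  have "\<bar>action L h (qEL h) - action L h (qhat h)\<bar> \<le> C * (2 * real DIM('a) * M (Suc s))\<^sup>2 * h ^ (2 * s + 1)"
    if h: "0 < h" "h < min h1 1" for h
  proof -
    have hI: "h \<in> {0<..h1}" using h by simp
    obtain c where "\<forall>t. qhat h t = (\<Sum>j\<le>s. t ^ j *\<^sub>R c j)" using qhat_poly hI by blast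
    then have poly: "qhat h = (\<lambda>t. \<Sum>j\<le>s. t ^ j *\<^sub>R c j)" by auto
    have nodes: "\<forall>i<s. h * d i < h * d (Suc i)" using d_mono h by simp
    have EL: "euler_lagrange_on L {0..h} (qEL h)"
      using EL_eq hI unfolding euler_lagrange_on_def by blast
    have D_h: "curve_derivs {0..h} (qEL h) (D h)" using D hI by blast
    have M_h: "\<And>k t. t \<in> {0..h} \<Longrightarrow> norm (D h k t) \<le> M k" using M hI by blast
    show ?thesis
    proof (rule action_interpolant_error_le[OF smooth_map_differentiable[OF L_smooth] taylor
          \<open>C \<ge> 0\<close> \<open>0 < h\<close> _ D_h EL poly nodes _ _ _ M_h M_h M_h])
      show "h \<le> 1" "h * d 0 = 0" "h * d s = h" using h d0 ds by simp_all
      show "qhat h (h * d i) = qEL h (h * d i)" if "i \<le> s" for i using qhat_interp hI that by blast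
    qed
  qed
  then have "\<forall>\<^sub>F h in at_right 0. norm (action L h (qEL h) - action L h (qhat h))
      \<le> C * (2 * real DIM('a) * M (Suc s))\<^sup>2 * norm (h ^ (2 * s + 1))"
    unfolding eventually_at_right_field using h1 by (intro exI[of _ "min h1 1"]) auto
  then show ?thesis by (rule bigoI)
qed

end
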